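(* Let $R$ be a commutative ring with identity and $S$ a multiplicative subset of $R$. Let $\xi: 0\rightarrow A\xrightarrow{f} B\xrightarrow{g} C\rightarrow 0$ be a $u$-$S$-split short $u$-$S$-exact sequence of $R$-modules. Then $\xi$ is $u$-$S$-pure.
   Context: A multiplicative subset $S$ satisfies $1\in S$ and is closed under products. A short sequence $0\to A\xrightarrow{f}B\xrightarrow{g}C\to 0$ is $u$-$S$-exact if there is $s\in S$ with $s\,\mathrm{Ker}(f)=0$, $s\,\mathrm{Ker}(g)\subseteq\mathrm{Im}(f)$, $s\,\mathrm{Im}(f)\subseteq\mathrm{Ker}(g)$, $sC\subseteq\mathrm{Im}(g)$. Such a sequence is $u$-$S$-split if there are $s\in S$ and an $R$-homomorphism $t:B\to A$ with $tf=s\,\mathrm{Id}_A$. It is $u$-$S$-pure if for every $R$-module $M$ the induced sequence $0\rightarrow M\otimes_RA\rightarrow M\otimes_RB\rightarrow M\otimes_RC\rightarrow 0$ is $u$-$S$-exact. *)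

theory Defs
  imports "HOL-Algebra.Module" "HOL-Algebra.Generated_Groups"
begin

definition mult_subset :: "('r, 'x) ring_scheme \<Rightarrow> 'r set \<Rightarrow> bool" where
  "mult_subset R S \<longleftrightarrow> S \<subseteq> carrier R \<and> \<one>\<^bsub>R\<^esub> \<in> S \<and>
     (\<forall>s\<in>S. \<forall>t\<in>S. s \<otimes>\<^bsub>R\<^esub> t \<in> S)"

definition mod_hom :: "('r, 'x) ring_scheme \<Rightarrow> ('r, 'a, 'y) module_scheme
    \<Rightarrow> ('r, 'b, 'z) module_scheme \<Rightarrow> ('a \<Rightarrow> 'b) \<Rightarrow> bool" where
  "mod_hom R M N h \<longleftrightarrow> h \<in> carrier M \<rightarrow> carrier N \<and>
     (\<forall>x\<in>carrier M. \<forall>y\<in>carrier M. h (x \<oplus>\<^bsub>M\<^esub> y) = h x \<oplus>\<^bsub>N\<^esub> h y) \<and>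
     (\<forall>r\<in>carrier R. \<forall>x\<in>carrier M. h (r \<odot>\<^bsub>M\<^esub> x) = r \<odot>\<^bsub>N\<^esub> h x)"

definition mod_ker :: "('r, 'a, 'y) module_scheme \<Rightarrow> ('r, 'b, 'z) module_scheme
    \<Rightarrow> ('a \<Rightarrow> 'b) \<Rightarrow> 'a set" where
  "mod_ker M N h = {x \<in> carrier M. h x = \<zero>\<^bsub>N\<^esub>}"

definition mod_im :: "('r, 'a, 'y) module_scheme \<Rightarrow> ('a \<Rightarrow> 'b) \<Rightarrow> 'b set" where
  "mod_im M h = h ` carrier M"

definition u_S_exact :: "('r, 'x) ring_scheme \<Rightarrow> 'r set
    \<Rightarrow> ('r, 'a, 'y1) module_scheme \<Rightarrow> ('r, 'b, 'y2) module_scheme \<Rightarrow> ('r, 'c, 'y3) module_scheme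
    \<Rightarrow> ('a \<Rightarrow> 'b) \<Rightarrow> ('b \<Rightarrow> 'c) \<Rightarrow> bool" where
  "u_S_exact R S A B C f g \<longleftrightarrow> (\<exists>s\<in>S.
     (\<forall>x\<in>mod_ker A B f. s \<odot>\<^bsub>A\<^esub> x = \<zero>\<^bsub>A\<^esub>) \<and>
     (\<forall>x\<in>mod_ker B C g. s \<odot>\<^bsub>B\<^esub> x \<in> mod_im A f) \<and>
     (\<forall>x\<in>mod_im A f. s \<odot>\<^bsub>B\<^esub> x \<in> mod_ker B C g) \<and>
     (\<forall>x\<in>carrier C. s \<odot>\<^bsub>C\<^esub> x \<in> mod_im B g))"

definition u_S_split :: "('r, 'x) ring_scheme \<Rightarrow> 'r set
    \<Rightarrow> ('r, 'a, 'y1) module_scheme \<Rightarrow> ('r, 'b, 'y2) module_scheme \<Rightarrow> ('a \<Rightarrow> 'b) \<Rightarrow> bool" where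
  "u_S_split R S A B f \<longleftrightarrow> (\<exists>s\<in>S. \<exists>t. mod_hom R B A t \<and>
     (\<forall>a\<in>carrier A. t (f a) = s \<odot>\<^bsub>A\<^esub> a))"

definition bilinear_map :: "('r, 'x) ring_scheme \<Rightarrow> ('r, 'm, 'y1) module_scheme
    \<Rightarrow> ('r, 'a, 'y2) module_scheme \<Rightarrow> ('r, 'n, 'y3) module_scheme \<Rightarrow> ('m \<Rightarrow> 'a \<Rightarrow> 'n) \<Rightarrow> bool" where
  "bilinear_map R M A N \<phi> \<longleftrightarrow>
     (\<forall>m\<in>carrier M. \<forall>a\<in>carrier A. \<phi> m a \<in> carrier N) \<and>
     (\<forall>m1\<in>carrier M. \<forall>m2\<in>carrier M. \<forall>a\<in>carrier A.
        \<phi> (m1 \<oplus>\<^bsub>M\<^esub> m2) a = \<phi> m1 a \<oplus>\<^bsub>N\<^esub> \<phi> m2 a) \<and>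
     (\<forall>m\<in>carrier M. \<forall>a1\<in>carrier A. \<forall>a2\<in>carrier A.
        \<phi> m (a1 \<oplus>\<^bsub>A\<^esub> a2) = \<phi> m a1 \<oplus>\<^bsub>N\<^esub> \<phi> m a2) \<and>
     (\<forall>r\<in>carrier R. \<forall>m\<in>carrier M. \<forall>a\<in>carrier A.
        \<phi> (r \<odot>\<^bsub>M\<^esub> m) a = r \<odot>\<^bsub>N\<^esub> \<phi> m a \<and> \<phi> m (r \<odot>\<^bsub>A\<^esub> a) = r \<odot>\<^bsub>N\<^esub> \<phi> m a)"

text \<open>Since HOL cannot quantify over types inside a formula, the universal
  property is required for target modules whose elements have the type
  ('m \<times> 'a \<Rightarrow> 'r) set; this type is large enough to carry the standard
  construction (cosets of finitely supported formal combinations), so together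
  with generation this characterises T up to unique isomorphism, exactly as
  the usual universal property does.\<close>
definition tensor_product :: "('r, 'x) ring_scheme \<Rightarrow> ('r, 'm, 'y1) module_scheme
    \<Rightarrow> ('r, 'a, 'y2) module_scheme \<Rightarrow> ('r, 't, 'y3) module_scheme \<Rightarrow> ('m \<Rightarrow> 'a \<Rightarrow> 't) \<Rightarrow> bool" where
  "tensor_product R M A T \<tau> \<longleftrightarrow>
     module R T \<and> bilinear_map R M A T \<tau> \<and>
     carrier T = generate (add_monoid T) {\<tau> m a | m a. m \<in> carrier M \<and> a \<in> carrier A} \<and>
     (\<forall>(N :: ('r, ('m \<times> 'a \<Rightarrow> 'r) set) module) \<phi>. module R N \<and> bilinear_map R M A N \<phi> \<longrightarrow>
        (\<exists>\<psi>. mod_hom R T N \<psi> \<and>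
           (\<forall>m\<in>carrier M. \<forall>a\<in>carrier A. \<psi> (\<tau> m a) = \<phi> m a)))"

end

theory Submission imports Defs "HOL-Algebra.AbelCoset" begin

text \<open>Let \<open>t f = s\<^sub>1 \<cdot> id\<close> and let \<open>s\<close> witness the u-S-exactness. Then \<open>\<pi> = s\<^sub>1 \<cdot> id - f t\<close>
  vanishes on the image of \<open>f\<close>, so \<open>s\<^sup>2 \<pi>\<close> factors as \<open>\<sigma> g\<close> with \<open>\<sigma> : C \<rightarrow> B\<close>. With \<open>r = s\<^sup>2 s\<^sub>1\<close> and
  \<open>\<tau> = s\<^sup>2 t\<close> this gives \<open>\<tau> f = r\<close>, \<open>g \<sigma> = r\<close> and \<open>\<sigma> g + f \<tau> = r\<close>: the sequence splits up to
  the scalar \<open>r\<close>. Identities between composites survive the functor \<open>M \<otimes> -\<close>, and a sequence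
  that splits up to some \<open>r \<in> S\<close> is u-S-exact with constant \<open>r\<close>.\<close>

context module
begin

lemma smult_commute:
  "a \<in> carrier R \<Longrightarrow> b \<in> carrier R \<Longrightarrow> x \<in> carrier M \<Longrightarrow> a \<odot>\<^bsub>M\<^esub> (b \<odot>\<^bsub>M\<^esub> x) = b \<odot>\<^bsub>M\<^esub> (a \<odot>\<^bsub>M\<^esub> x)"
  by (metis m_comm smult_assoc1)

end

lemma mod_hom_closed:
  "mod_hom R M N h \<Longrightarrow> x \<in> carrier M \<Longrightarrow> h x \<in> carrier N"
  unfolding mod_hom_def by auto

lemma mod_hom_add:
  "mod_hom R M N h \<Longrightarrow> x \<in> carrier M \<Longrightarrow> y \<in> carrier M \<Longrightarrow> h (x \<oplus>\<^bsub>M\<^esub> y) = h x \<oplus>\<^bsub>N\<^esub> h y"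
  unfolding mod_hom_def by auto

lemma mod_hom_smult:
  "mod_hom R M N h \<Longrightarrow> r \<in> carrier R \<Longrightarrow> x \<in> carrier M \<Longrightarrow> h (r \<odot>\<^bsub>M\<^esub> x) = r \<odot>\<^bsub>N\<^esub> h x"
  unfolding mod_hom_def by auto

lemma mod_hom_abelian_group_hom:
  assumes "module R M" "module R N" "mod_hom R M N h"
  shows "abelian_group_hom M N h"
proof -
  interpret M: module R M by fact
  interpret N: module R N by fact
  show ?thesis
    using assms(3) unfolding mod_hom_def
    by (intro abelian_group_homI group_hom.intro group_hom_axioms.intro
        M.abelian_group_axioms N.abelian_group_axioms M.a_group N.a_group) (auto simp: hom_def)
qed

lemma mod_hom_zero:
  "module R M \<Longrightarrow> module R N \<Longrightarrow> mod_hom R M N h \<Longrightarrow> h \<zero>\<^bsub>M\<^esub> = \<zero>\<^bsub>N\<^esub>"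
  by (rule abelian_group_hom.hom_zero[OF mod_hom_abelian_group_hom])

lemma mod_hom_a_inv:
  "module R M \<Longrightarrow> module R N \<Longrightarrow> mod_hom R M N h \<Longrightarrow> x \<in> carrier M \<Longrightarrow> h (\<ominus>\<^bsub>M\<^esub> x) = \<ominus>\<^bsub>N\<^esub> h x"
  by (rule abelian_group_hom.hom_a_inv[OF mod_hom_abelian_group_hom])

lemma mod_hom_comp:
  "mod_hom R M N h \<Longrightarrow> mod_hom R N P k \<Longrightarrow> mod_hom R M P (\<lambda>x. k (h x))"
  unfolding mod_hom_def by (auto simp: Pi_iff)

lemma mod_hom_smult_const:
  assumes "module R M" "r \<in> carrier R"
  shows "mod_hom R M M (\<lambda>x. r \<odot>\<^bsub>M\<^esub> x)"
proof -
  interpret M: module R M by fact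
  show ?thesis
    using assms(2) unfolding mod_hom_def by (auto simp: M.smult_r_distr M.smult_commute[of r])
qed

lemma mod_hom_add_fun:
  assumes "module R N" "mod_hom R M N h" "mod_hom R M N k"
  shows "mod_hom R M N (\<lambda>x. h x \<oplus>\<^bsub>N\<^esub> k x)"
proof -
  interpret N: module R N by fact
  show ?thesis
    using assms(2,3) unfolding mod_hom_def
    by (auto simp: Pi_iff N.smult_r_distr N.a_ac)
qed

lemma mod_hom_minus:
  assumes "module R M" "module R N" "mod_hom R M N h" "x \<in> carrier M" "y \<in> carrier M"
  shows "h (x \<ominus>\<^bsub>M\<^esub> y) = h x \<ominus>\<^bsub>N\<^esub> h y"
proof -
  interpret M: module R M by fact
  show ?thesis
    using assms by (simp add: a_minus_def mod_hom_add mod_hom_a_inv)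
qed

lemma mod_hom_diff_fun:
  assumes "module R N" "mod_hom R M N h" "mod_hom R M N k"
  shows "mod_hom R M N (\<lambda>x. h x \<ominus>\<^bsub>N\<^esub> k x)"
proof -
  interpret N: module R N by fact
  show ?thesis
    using assms(2,3) unfolding mod_hom_def
    by (auto simp: Pi_iff a_minus_def N.minus_add N.smult_r_distr N.smult_r_minus N.a_ac)
qed

section \<open>Linear combinations and spans\<close>

definition support :: "('r, 'x) ring_scheme \<Rightarrow> ('p \<Rightarrow> 'r) \<Rightarrow> 'p set" where
  "support R \<chi> = {p. \<chi> p \<noteq> \<zero>\<^bsub>R\<^esub>}"

definition fin_coeffs :: "('r, 'x) ring_scheme \<Rightarrow> 'p set \<Rightarrow> ('p \<Rightarrow> 'r) set" where
  "fin_coeffs R P = {\<chi>. range \<chi> \<subseteq> carrier R \<and> finite (support R \<chi>) \<and> support R \<chi> \<subseteq> P}"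

definition lin_comb :: "('r, 'x) ring_scheme \<Rightarrow> ('r, 'n, 'z) module_scheme \<Rightarrow> ('p \<Rightarrow> 'n) \<Rightarrow> ('p \<Rightarrow> 'r) \<Rightarrow> 'n" where
  "lin_comb R N v \<chi> = (\<Oplus>\<^bsub>N\<^esub> p \<in> support R \<chi>. \<chi> p \<odot>\<^bsub>N\<^esub> v p)"

definition lin_span :: "('r, 'x) ring_scheme \<Rightarrow> ('r, 'n, 'z) module_scheme \<Rightarrow> ('p \<Rightarrow> 'n) \<Rightarrow> 'p set \<Rightarrow> 'n set" where
  "lin_span R N v P = lin_comb R N v ` fin_coeffs R P"

lemma fin_coeffsD:
  assumes "\<chi> \<in> fin_coeffs R P"
  shows "\<chi> p \<in> carrier R" "finite (support R \<chi>)" "support R \<chi> \<subseteq> P"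
  using assms by (auto simp: fin_coeffs_def)

context module
begin

lemma lin_comb_eq_finsum:
  assumes v: "v \<in> P \<rightarrow> carrier M" and \<chi>: "\<chi> \<in> fin_coeffs R P"
    and U: "finite U" "support R \<chi> \<subseteq> U" "U \<subseteq> P"
  shows "lin_comb R M v \<chi> = (\<Oplus>\<^bsub>M\<^esub> p \<in> U. \<chi> p \<odot>\<^bsub>M\<^esub> v p)"
  unfolding lin_comb_def
proof (rule add.finprod_mono_neutral_cong_right[symmetric])
  show "\<chi> p \<odot>\<^bsub>M\<^esub> v p = \<zero>\<^bsub>M\<^esub>" if "p \<in> U - support R \<chi>" for p
    using that funcset_mem[OF v, of p] U(3) by (auto simp: support_def)
  show "(\<lambda>p. \<chi> p \<odot>\<^bsub>M\<^esub> v p) \<in> U \<rightarrow> carrier M"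
    using U v fin_coeffsD(1)[OF \<chi>] by (auto simp: Pi_iff)
qed (use U in auto)

lemma lin_comb_add:
  assumes v: "v \<in> P \<rightarrow> carrier M" and \<chi>: "\<chi> \<in> fin_coeffs R P" and \<psi>: "\<psi> \<in> fin_coeffs R P"
  shows "(\<lambda>p. \<chi> p \<oplus>\<^bsub>R\<^esub> \<psi> p) \<in> fin_coeffs R P"
    and "lin_comb R M v (\<lambda>p. \<chi> p \<oplus>\<^bsub>R\<^esub> \<psi> p) = lin_comb R M v \<chi> \<oplus>\<^bsub>M\<^esub> lin_comb R M v \<psi>"
proof -
  let ?U = "support R \<chi> \<union> support R \<psi>"
  note coeffs = fin_coeffsD[OF \<chi>] fin_coeffsD[OF \<psi>]
  have U: "finite ?U" "?U \<subseteq> P"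
    using coeffs by auto
  have supp: "support R (\<lambda>p. \<chi> p \<oplus>\<^bsub>R\<^esub> \<psi> p) \<subseteq> ?U"
    by (auto simp: support_def)
  then show sum_coeffs: "(\<lambda>p. \<chi> p \<oplus>\<^bsub>R\<^esub> \<psi> p) \<in> fin_coeffs R P"
    using U coeffs by (auto simp: fin_coeffs_def intro: finite_subset)
  have vU: "v p \<in> carrier M" if "p \<in> ?U" for p
    using that U v by auto
  have "lin_comb R M v (\<lambda>p. \<chi> p \<oplus>\<^bsub>R\<^esub> \<psi> p)
      = (\<Oplus>\<^bsub>M\<^esub> p \<in> ?U. \<chi> p \<odot>\<^bsub>M\<^esub> v p \<oplus>\<^bsub>M\<^esub> \<psi> p \<odot>\<^bsub>M\<^esub> v p)"
    unfolding lin_comb_eq_finsum[OF v sum_coeffs U(1) supp U(2)]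
    by (rule add.finprod_cong') (use vU coeffs in \<open>auto simp: smult_l_distr\<close>)
  also have "\<dots> = lin_comb R M v \<chi> \<oplus>\<^bsub>M\<^esub> lin_comb R M v \<psi>"
    using vU coeffs U
    by (simp add: finsum_addf lin_comb_eq_finsum[OF v \<chi> U(1) _ U(2)]
        lin_comb_eq_finsum[OF v \<psi> U(1) _ U(2)])
  finally show "lin_comb R M v (\<lambda>p. \<chi> p \<oplus>\<^bsub>R\<^esub> \<psi> p) = lin_comb R M v \<chi> \<oplus>\<^bsub>M\<^esub> lin_comb R M v \<psi>" .
qed

lemma lin_comb_smult:
  assumes v: "v \<in> P \<rightarrow> carrier M" and \<chi>: "\<chi> \<in> fin_coeffs R P" and r: "r \<in> carrier R"
  shows "(\<lambda>p. r \<otimes>\<^bsub>R\<^esub> \<chi> p) \<in> fin_coeffs R P"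
    and "lin_comb R M v (\<lambda>p. r \<otimes>\<^bsub>R\<^esub> \<chi> p) = r \<odot>\<^bsub>M\<^esub> lin_comb R M v \<chi>"
proof -
  note coeffs = fin_coeffsD[OF \<chi>]
  have supp: "support R (\<lambda>p. r \<otimes>\<^bsub>R\<^esub> \<chi> p) \<subseteq> support R \<chi>"
    using r by (auto simp: support_def)
  then show scaled: "(\<lambda>p. r \<otimes>\<^bsub>R\<^esub> \<chi> p) \<in> fin_coeffs R P"
    using coeffs r by (auto simp: fin_coeffs_def intro: finite_subset)
  have vU: "v p \<in> carrier M" if "p \<in> support R \<chi>" for p
    using that coeffs v by auto
  have "lin_comb R M v (\<lambda>p. r \<otimes>\<^bsub>R\<^esub> \<chi> p)
      = (\<Oplus>\<^bsub>M\<^esub> p \<in> support R \<chi>. r \<odot>\<^bsub>M\<^esub> (\<chi> p \<odot>\<^bsub>M\<^esub> v p))"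
    using vU coeffs r
    by (auto simp: lin_comb_eq_finsum[OF v scaled coeffs(2) supp coeffs(3)] smult_assoc1
        intro!: add.finprod_cong')
  also have "\<dots> = r \<odot>\<^bsub>M\<^esub> lin_comb R M v \<chi>"
    using vU coeffs r by (simp add: lin_comb_def finsum_smult_ldistr)
  finally show "lin_comb R M v (\<lambda>p. r \<otimes>\<^bsub>R\<^esub> \<chi> p) = r \<odot>\<^bsub>M\<^esub> lin_comb R M v \<chi>" .
qed

lemma lin_span_submodule:
  assumes v: "v \<in> P \<rightarrow> carrier M"
  shows "submodule (lin_span R M v P) R M"
proof (rule submoduleI)
  have "lin_comb R M v \<chi> \<in> carrier M" if "\<chi> \<in> fin_coeffs R P" for \<chi>
    using v fin_coeffsD[OF that] unfolding lin_comb_def by (intro finsum_closed) (auto simp: Pi_iff)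
  then show sub: "lin_span R M v P \<subseteq> carrier M"
    by (auto simp: lin_span_def)
  have "(\<lambda>_. \<zero>\<^bsub>R\<^esub>) \<in> fin_coeffs R P" "lin_comb R M v (\<lambda>_. \<zero>\<^bsub>R\<^esub>) = \<zero>\<^bsub>M\<^esub>"
    by (auto simp: fin_coeffs_def support_def lin_comb_def)
  then show "\<zero>\<^bsub>M\<^esub> \<in> lin_span R M v P"
    unfolding lin_span_def by (simp add: rev_image_eqI)
  show smult: "r \<odot>\<^bsub>M\<^esub> x \<in> lin_span R M v P" if r: "r \<in> carrier R" and x: "x \<in> lin_span R M v P" for r x
  proof -
    obtain \<chi> where \<chi>: "\<chi> \<in> fin_coeffs R P" and "x = lin_comb R M v \<chi>"
      using x unfolding lin_span_def by blast
    then have "r \<odot>\<^bsub>M\<^esub> x = lin_comb R M v (\<lambda>p. r \<otimes>\<^bsub>R\<^esub> \<chi> p)"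
      by (simp add: lin_comb_smult(2)[OF v \<chi> r])
    then show ?thesis
      unfolding lin_span_def using lin_comb_smult(1)[OF v \<chi> r] by (rule image_eqI)
  qed
  show "x \<oplus>\<^bsub>M\<^esub> y \<in> lin_span R M v P" if xy: "x \<in> lin_span R M v P" "y \<in> lin_span R M v P" for x y
  proof -
    obtain \<chi> \<psi> where \<chi>: "\<chi> \<in> fin_coeffs R P" and \<psi>: "\<psi> \<in> fin_coeffs R P"
      and "x = lin_comb R M v \<chi>" "y = lin_comb R M v \<psi>"
      using xy unfolding lin_span_def by blast
    then have "x \<oplus>\<^bsub>M\<^esub> y = lin_comb R M v (\<lambda>p. \<chi> p \<oplus>\<^bsub>R\<^esub> \<psi> p)"
      by (simp add: lin_comb_add(2)[OF v \<chi> \<psi>])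
    then show ?thesis
      unfolding lin_span_def using lin_comb_add(1)[OF v \<chi> \<psi>] by (rule image_eqI)
  qed
  show "\<ominus>\<^bsub>M\<^esub> x \<in> lin_span R M v P" if "x \<in> lin_span R M v P" for x
    using smult[OF _ that, of "\<ominus>\<^bsub>R\<^esub> \<one>\<^bsub>R\<^esub>"] that sub by (auto simp: smult_l_minus)
qed

lemma lin_span_base:
  assumes v: "v \<in> P \<rightarrow> carrier M" and p: "p \<in> P"
  shows "v p \<in> lin_span R M v P"
proof -
  let ?\<chi> = "\<lambda>q. if q = p then \<one>\<^bsub>R\<^esub> else \<zero>\<^bsub>R\<^esub>"
  have supp: "support R ?\<chi> \<subseteq> {p}"
    by (auto simp: support_def)
  then have coeffs: "?\<chi> \<in> fin_coeffs R P"
    using p by (auto simp: fin_coeffs_def intro: finite_subset)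
  have "lin_comb R M v ?\<chi> = (\<Oplus>\<^bsub>M\<^esub> q \<in> {p}. ?\<chi> q \<odot>\<^bsub>M\<^esub> v q)"
    using supp p by (intro lin_comb_eq_finsum[OF v coeffs]) auto
  also have "\<dots> = v p"
    using funcset_mem[OF v p] by simp
  finally show ?thesis
    unfolding lin_span_def using coeffs by (rule image_eqI[OF sym])
qed

end

section \<open>Bilinear maps and transport of module structure\<close>

lemma bilinear_mapD:
  assumes "bilinear_map R M A N \<phi>" "m \<in> carrier M"
  shows bilinear_map_add_right:
      "a \<in> carrier A \<Longrightarrow> a' \<in> carrier A \<Longrightarrow> \<phi> m (a \<oplus>\<^bsub>A\<^esub> a') = \<phi> m a \<oplus>\<^bsub>N\<^esub> \<phi> m a'"
    and bilinear_map_smult_right: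
      "r \<in> carrier R \<Longrightarrow> a \<in> carrier A \<Longrightarrow> \<phi> m (r \<odot>\<^bsub>A\<^esub> a) = r \<odot>\<^bsub>N\<^esub> \<phi> m a"
  using assms unfolding bilinear_map_def by auto

lemma bilinear_map_comp_right:
  "bilinear_map R M A N \<phi> \<Longrightarrow> mod_hom R B A h \<Longrightarrow> bilinear_map R M B N (\<lambda>m b. \<phi> m (h b))"
  unfolding bilinear_map_def mod_hom_def by (auto simp: Pi_iff)

definition transport :: "('r, 'n, 'z) module_scheme \<Rightarrow> ('n \<Rightarrow> 'x) \<Rightarrow> ('r, 'x) module" where
  "transport N e =
    \<lparr>carrier = e ` carrier N, mult = (\<lambda>x y. x), one = e \<zero>\<^bsub>N\<^esub>, zero = e \<zero>\<^bsub>N\<^esub>,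
     add = (\<lambda>x y. e (inv_into (carrier N) e x \<oplus>\<^bsub>N\<^esub> inv_into (carrier N) e y)),
     smult = (\<lambda>r x. e (r \<odot>\<^bsub>N\<^esub> inv_into (carrier N) e x))\<rparr>"

lemma transport_simps:
  "carrier (transport N e) = e ` carrier N"
  "\<zero>\<^bsub>transport N e\<^esub> = e \<zero>\<^bsub>N\<^esub>"
  "x \<oplus>\<^bsub>transport N e\<^esub> y = e (inv_into (carrier N) e x \<oplus>\<^bsub>N\<^esub> inv_into (carrier N) e y)"
  "r \<odot>\<^bsub>transport N e\<^esub> x = e (r \<odot>\<^bsub>N\<^esub> inv_into (carrier N) e x)"
  unfolding transport_def by simp_all

lemma module_transport:
  assumes "module R N" "inj_on e (carrier N)"
  shows "module R (transport N e)"
proof -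
  interpret N: module R N by fact
  have [simp]: "inv_into (carrier N) e (e x) = x" if "x \<in> carrier N" for x
    using assms(2) that by simp
  have neg: "\<exists>y\<in>carrier (transport N e). y \<oplus>\<^bsub>transport N e\<^esub> x = \<zero>\<^bsub>transport N e\<^esub>"
    if "x \<in> carrier (transport N e)" for x
    using that by (auto simp: transport_simps) (metis N.a_inv_closed N.l_neg)
  show ?thesis
    by (intro moduleI abelian_groupI N.is_cring neg)
       (auto simp: transport_simps N.a_ac N.smult_l_distr N.smult_r_distr N.smult_assoc1)
qed

lemma bilinear_map_transport:
  assumes "module R N" "inj_on e (carrier N)" "bilinear_map R M B N \<phi>"
  shows "bilinear_map R M B (transport N e) (\<lambda>m b. e (\<phi> m b))"
proof -
  interpret N: module R N by fact
  have [simp]: "inv_into (carrier N) e (e x) = x" if "x \<in> carrier N" for x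
    using assms(2) that by simp
  show ?thesis
    using assms(3) unfolding bilinear_map_def by (auto simp: transport_simps)
qed

lemma mod_hom_transport_inv:
  assumes "module R N" "inj_on e (carrier N)" "mod_hom R T (transport N e) h"
  shows "mod_hom R T N (\<lambda>x. inv_into (carrier N) e (h x))"
proof -
  interpret N: module R N by fact
  have h: "h x \<in> e ` carrier N" if "x \<in> carrier T" for x
    using mod_hom_closed[OF assms(3) that] by (simp add: transport_simps)
  then have [simp]: "inv_into (carrier N) e (h x) \<in> carrier N" "e (inv_into (carrier N) e (h x)) = h x"
    if "x \<in> carrier T" for x
    using that by (simp_all add: inv_into_into f_inv_into_f)
  have [simp]: "inv_into (carrier N) e (e y) = y" if "y \<in> carrier N" for y
    using assms(2) that by simp
  show ?thesis
    using assms(3) unfolding mod_hom_def by (auto simp: transport_simps)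
qed

section \<open>Tensor products\<close>

lemma tensor_productD:
  assumes "tensor_product R M A T \<tau>"
  shows tensor_product_module: "module R T"
    and tensor_product_bilinear: "bilinear_map R M A T \<tau>"
    and tensor_product_generated:
      "carrier T = generate (add_monoid T) {\<tau> m a | m a. m \<in> carrier M \<and> a \<in> carrier A}"
  using assms unfolding tensor_product_def by auto

lemma tensor_product_universal:
  fixes M :: "('r, 'm, 'v) module_scheme" and A :: "('r, 'a, 'y) module_scheme"
    and N :: "('r, ('m \<times> 'a \<Rightarrow> 'r) set) module"
  assumes "tensor_product R M A T \<tau>" "module R N" "bilinear_map R M A N \<phi>"
  shows "\<exists>\<psi>. mod_hom R T N \<psi> \<and> (\<forall>m\<in>carrier M. \<forall>a\<in>carrier A. \<psi> (\<tau> m a) = \<phi> m a)"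
  using assms unfolding tensor_product_def by blast

lemma tensor_product_hom_ext:
  assumes TP: "tensor_product R M A T \<tau>" and N: "module R N"
    and h: "mod_hom R T N h" and k: "mod_hom R T N k"
    and pure: "\<And>m a. m \<in> carrier M \<Longrightarrow> a \<in> carrier A \<Longrightarrow> h (\<tau> m a) = k (\<tau> m a)"
    and x: "x \<in> carrier T"
  shows "h x = k x"
proof -
  note T = tensor_product_module[OF TP]
  let ?X = "{\<tau> m a | m a. m \<in> carrier M \<and> a \<in> carrier A}"
  have gen: "generate (add_monoid T) ?X = carrier T"
    using tensor_product_generated[OF TP] by (rule sym)
  from x have "x \<in> generate (add_monoid T) ?X"
    unfolding gen .
  then show ?thesis
  proof (induction x rule: generate.induct)
    case one
    show ?case
      using mod_hom_zero[OF T N h] mod_hom_zero[OF T N k] by simp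
  next
    case (incl y)
    then show ?case
      using pure by blast
  next
    case (inv y)
    then have "y \<in> carrier T" "h y = k y"
      using pure generate.incl[OF inv, where G = "add_monoid T", unfolded gen] by auto
    then show ?case
      using mod_hom_a_inv[OF T N h] mod_hom_a_inv[OF T N k] by (simp add: a_inv_def)
  next
    case (eng y z)
    then have "y \<in> carrier T" "z \<in> carrier T"
      unfolding gen by simp_all
    then show ?case
      using eng.IH mod_hom_add[OF h] mod_hom_add[OF k] by simp
  qed
qed

text \<open>The universal property in \<open>tensor_product\<close> only covers targets whose elements are sets
  of coefficient functions on \<open>M \<times> B\<close>. For an arbitrary target, the span of the values
  \<open>\<phi> m b\<close> is embedded into that type by sending an element to the set of coefficient
  functions whose linear combination it is.\<close>

lemma tensor_product_lift_submodule:
  fixes M :: "('r, 'm, 'v) module_scheme" and B :: "('r, 'b, 'y) module_scheme"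
    and N :: "('r, 'n, 'w) module_scheme" and e :: "'n \<Rightarrow> ('m \<times> 'b \<Rightarrow> 'r) set"
  assumes TP: "tensor_product R M B T \<tau>" and N: "module R N" and \<phi>: "bilinear_map R M B N \<phi>"
    and N0: "submodule N0 R N" and \<phi>_N0: "\<And>m b. m \<in> carrier M \<Longrightarrow> b \<in> carrier B \<Longrightarrow> \<phi> m b \<in> N0"
    and e: "inj_on e N0"
  shows "\<exists>\<psi>. mod_hom R T N \<psi> \<and> (\<forall>m\<in>carrier M. \<forall>b\<in>carrier B. \<psi> (\<tau> m b) = \<phi> m b)"
proof -
  let ?N0 = "N\<lparr>carrier := N0\<rparr>"
  have N0_module: "module R ?N0"
    by (rule submodule.submodule_is_module[OF N0 N])
  have "bilinear_map R M B ?N0 \<phi>"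
    using \<phi> \<phi>_N0 unfolding bilinear_map_def by simp
  then have bilinear: "bilinear_map R M B (transport ?N0 e) (\<lambda>m b. e (\<phi> m b))"
    using bilinear_map_transport[OF N0_module] e by simp
  have "module R (transport ?N0 e)"
    using module_transport[OF N0_module] e by simp
  then obtain \<psi>' where \<psi>': "mod_hom R T (transport ?N0 e) \<psi>'"
    and pure: "\<forall>m\<in>carrier M. \<forall>b\<in>carrier B. \<psi>' (\<tau> m b) = e (\<phi> m b)"
    using tensor_product_universal[OF TP _ bilinear] by blast
  have "mod_hom R T ?N0 (\<lambda>x. inv_into N0 e (\<psi>' x))"
    using mod_hom_transport_inv[OF N0_module _ \<psi>'] e by simp
  then have "mod_hom R T N (\<lambda>x. inv_into N0 e (\<psi>' x))"
    using module.submoduleE(1)[OF N N0] unfolding mod_hom_def by auto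
  moreover have "\<forall>m\<in>carrier M. \<forall>b\<in>carrier B. inv_into N0 e (\<psi>' (\<tau> m b)) = \<phi> m b"
    using pure \<phi>_N0 e by simp
  ultimately show ?thesis
    by blast
qed

lemma tensor_product_lift:
  fixes T :: "('r, 't, 'z) module_scheme" and N :: "('r, 'n, 'w) module_scheme"
    and B :: "('r, 'b, 'y) module_scheme" and M :: "('r, 'm, 'v) module_scheme"
  assumes TP: "tensor_product R M B T \<tau>" and N: "module R N" and \<phi>: "bilinear_map R M B N \<phi>"
  shows "\<exists>\<psi>. mod_hom R T N \<psi> \<and> (\<forall>m\<in>carrier M. \<forall>b\<in>carrier B. \<psi> (\<tau> m b) = \<phi> m b)"
proof -
  interpret N: module R N by fact
  let ?v = "case_prod \<phi>" and ?P = "carrier M \<times> carrier B"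
  have v: "?v \<in> ?P \<rightarrow> carrier N"
    using \<phi> unfolding bilinear_map_def by auto
  show ?thesis
  proof (rule tensor_product_lift_submodule[OF TP N \<phi>])
    show "submodule (lin_span R N ?v ?P) R N"
      by (rule N.lin_span_submodule[OF v])
    show "\<phi> m b \<in> lin_span R N ?v ?P" if "m \<in> carrier M" "b \<in> carrier B" for m b
      using N.lin_span_base[OF v, of "(m, b)"] that by simp
    show "inj_on (\<lambda>x. lin_comb R N ?v -` {x}) (lin_span R N ?v ?P)"
      unfolding lin_span_def by (rule inj_on_vimage_image)
  qed
qed

lemma tensor_map_exists:
  assumes "tensor_product R M B TB tB" "tensor_product R M A TA tA" "mod_hom R B A h"
  shows "\<exists>H. mod_hom R TB TA H \<and> (\<forall>m\<in>carrier M. \<forall>b\<in>carrier B. H (tB m b) = tA m (h b))"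
  using tensor_product_lift[OF assms(1) tensor_product_module[OF assms(2)]
      bilinear_map_comp_right[OF tensor_product_bilinear[OF assms(2)] assms(3)]] .

section \<open>Sequences that split up to a scalar\<close>

definition split_up_to :: "('r, 'a, 'y1) module_scheme \<Rightarrow> ('r, 'b, 'y2) module_scheme
    \<Rightarrow> ('r, 'c, 'y3) module_scheme \<Rightarrow> ('a \<Rightarrow> 'b) \<Rightarrow> ('b \<Rightarrow> 'c) \<Rightarrow> ('b \<Rightarrow> 'a) \<Rightarrow> ('c \<Rightarrow> 'b) \<Rightarrow> 'r \<Rightarrow> bool" where
  "split_up_to A B C f g \<tau> \<sigma> r \<longleftrightarrow>
     (\<forall>a\<in>carrier A. \<tau> (f a) = r \<odot>\<^bsub>A\<^esub> a) \<and>
     (\<forall>c\<in>carrier C. g (\<sigma> c) = r \<odot>\<^bsub>C\<^esub> c) \<and>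
     (\<forall>b\<in>carrier B. \<sigma> (g b) \<oplus>\<^bsub>B\<^esub> f (\<tau> b) = r \<odot>\<^bsub>B\<^esub> b)"

lemma split_up_to_imp_u_S_exact:
  assumes A: "module R A" and B: "module R B" and C: "module R C"
    and f: "mod_hom R A B f" and g: "mod_hom R B C g"
    and \<tau>: "mod_hom R B A \<tau>" and \<sigma>: "mod_hom R C B \<sigma>"
    and r: "r \<in> S" "r \<in> carrier R" and split: "split_up_to A B C f g \<tau> \<sigma> r"
  shows "u_S_exact R S A B C f g"
  unfolding u_S_exact_def
proof (intro bexI[OF _ r(1)] conjI ballI)
  interpret B: module R B by fact
  note \<tau>f = split[unfolded split_up_to_def, THEN conjunct1, rule_format]
  note g\<sigma> = split[unfolded split_up_to_def, THEN conjunct2, THEN conjunct1, rule_format]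
  note \<sigma>g = split[unfolded split_up_to_def, THEN conjunct2, THEN conjunct2, rule_format]
  show "r \<odot>\<^bsub>A\<^esub> x = \<zero>\<^bsub>A\<^esub>" if "x \<in> mod_ker A B f" for x
    using that \<tau>f mod_hom_zero[OF B A \<tau>] unfolding mod_ker_def by force
  show "r \<odot>\<^bsub>B\<^esub> x \<in> mod_im A f" if "x \<in> mod_ker B C g" for x
  proof -
    have "x \<in> carrier B" "g x = \<zero>\<^bsub>C\<^esub>"
      using that unfolding mod_ker_def by auto
    then have "r \<odot>\<^bsub>B\<^esub> x = f (\<tau> x)"
      using \<sigma>g[of x] mod_hom_zero[OF C B \<sigma>] mod_hom_closed[OF f] mod_hom_closed[OF \<tau>] by simp
    then show ?thesis
      using mod_hom_closed[OF \<tau> \<open>x \<in> carrier B\<close>] unfolding mod_im_def by simp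
  qed
  show "r \<odot>\<^bsub>B\<^esub> x \<in> mod_ker B C g" if im: "x \<in> mod_im A f" for x
  proof -
    obtain a where a: "a \<in> carrier A" and x: "x = f a"
      using im unfolding mod_im_def by blast
    have fa: "f a \<in> carrier B" and gfa: "g (f a) \<in> carrier C"
      using a mod_hom_closed[OF f] mod_hom_closed[OF g] by auto
    have "\<sigma> (g (f a)) \<oplus>\<^bsub>B\<^esub> r \<odot>\<^bsub>B\<^esub> f a = r \<odot>\<^bsub>B\<^esub> f a"
      using \<sigma>g[OF fa] \<tau>f[OF a] mod_hom_smult[OF f r(2) a] by simp
    then have "\<sigma> (g (f a)) = \<zero>\<^bsub>B\<^esub>"
      using fa gfa r(2) mod_hom_closed[OF \<sigma>] by simp
    then have "g (r \<odot>\<^bsub>B\<^esub> f a) = \<zero>\<^bsub>C\<^esub>"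
      using g\<sigma>[OF gfa] mod_hom_smult[OF g r(2) fa] mod_hom_zero[OF B C g] by simp
    then show ?thesis
      using x fa r(2) unfolding mod_ker_def by simp
  qed
  show "r \<odot>\<^bsub>C\<^esub> c \<in> mod_im B g" if "c \<in> carrier C" for c
    using that g\<sigma> mod_hom_closed[OF \<sigma>] unfolding mod_im_def by (metis image_eqI)
qed

lemma split_up_to_tensor:
  assumes TA: "tensor_product R M A TA tA" and TB: "tensor_product R M B TB tB"
    and TC: "tensor_product R M C TC tC"
    and f: "mod_hom R A B f" and g: "mod_hom R B C g"
    and \<tau>: "mod_hom R B A \<tau>" and \<sigma>: "mod_hom R C B \<sigma>"
    and F: "mod_hom R TA TB F" "\<And>m a. m \<in> carrier M \<Longrightarrow> a \<in> carrier A \<Longrightarrow> F (tA m a) = tB m (f a)"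
    and G: "mod_hom R TB TC G" "\<And>m b. m \<in> carrier M \<Longrightarrow> b \<in> carrier B \<Longrightarrow> G (tB m b) = tC m (g b)"
    and T: "mod_hom R TB TA T" "\<And>m b. m \<in> carrier M \<Longrightarrow> b \<in> carrier B \<Longrightarrow> T (tB m b) = tA m (\<tau> b)"
    and \<Sigma>: "mod_hom R TC TB \<Sigma>" "\<And>m c. m \<in> carrier M \<Longrightarrow> c \<in> carrier C \<Longrightarrow> \<Sigma> (tC m c) = tB m (\<sigma> c)"
    and r: "r \<in> carrier R" and split: "split_up_to A B C f g \<tau> \<sigma> r"
  shows "split_up_to TA TB TC F G T \<Sigma> r"
proof -
  note modules = tensor_product_module[OF TA] tensor_product_module[OF TB] tensor_product_module[OF TC]
  note bilinear = tensor_product_bilinear[OF TA] tensor_product_bilinear[OF TB] tensor_product_bilinear[OF TC]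
  note \<tau>f = split[unfolded split_up_to_def, THEN conjunct1, rule_format]
  note g\<sigma> = split[unfolded split_up_to_def, THEN conjunct2, THEN conjunct1, rule_format]
  note \<sigma>g = split[unfolded split_up_to_def, THEN conjunct2, THEN conjunct2, rule_format]
  have "T (F x) = r \<odot>\<^bsub>TA\<^esub> x" if "x \<in> carrier TA" for x
  proof (rule tensor_product_hom_ext[OF TA modules(1) mod_hom_comp[OF F(1) T(1)]
        mod_hom_smult_const[OF modules(1) r] _ that])
    show "T (F (tA m a)) = r \<odot>\<^bsub>TA\<^esub> tA m a" if "m \<in> carrier M" "a \<in> carrier A" for m a
      using that F(2) T(2) \<tau>f mod_hom_closed[OF f] bilinear_map_smult_right[OF bilinear(1) _ r] by simp
  qed
  moreover have "G (\<Sigma> x) = r \<odot>\<^bsub>TC\<^esub> x" if "x \<in> carrier TC" for x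
  proof (rule tensor_product_hom_ext[OF TC modules(3) mod_hom_comp[OF \<Sigma>(1) G(1)]
        mod_hom_smult_const[OF modules(3) r] _ that])
    show "G (\<Sigma> (tC m c)) = r \<odot>\<^bsub>TC\<^esub> tC m c" if "m \<in> carrier M" "c \<in> carrier C" for m c
      using that G(2) \<Sigma>(2) g\<sigma> mod_hom_closed[OF \<sigma>] bilinear_map_smult_right[OF bilinear(3) _ r] by simp
  qed
  moreover have "\<Sigma> (G y) \<oplus>\<^bsub>TB\<^esub> F (T y) = r \<odot>\<^bsub>TB\<^esub> y" if "y \<in> carrier TB" for y
  proof (rule tensor_product_hom_ext[OF TB modules(2)
        mod_hom_add_fun[OF modules(2) mod_hom_comp[OF G(1) \<Sigma>(1)] mod_hom_comp[OF T(1) F(1)]]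
        mod_hom_smult_const[OF modules(2) r] _ that])
    fix m b assume m: "m \<in> carrier M" and b: "b \<in> carrier B"
    have "\<Sigma> (G (tB m b)) \<oplus>\<^bsub>TB\<^esub> F (T (tB m b)) = tB m (\<sigma> (g b) \<oplus>\<^bsub>B\<^esub> f (\<tau> b))"
      using m b G(2) \<Sigma>(2) T(2) F(2) mod_hom_closed[OF g] mod_hom_closed[OF \<sigma>]
        mod_hom_closed[OF \<tau>] mod_hom_closed[OF f] bilinear_map_add_right[OF bilinear(2) m]
      by simp
    then show "\<Sigma> (G (tB m b)) \<oplus>\<^bsub>TB\<^esub> F (T (tB m b)) = r \<odot>\<^bsub>TB\<^esub> tB m b"
      using \<sigma>g[OF b] bilinear_map_smult_right[OF bilinear(2) m r b] by simp
  qed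
  ultimately show ?thesis
    unfolding split_up_to_def by blast
qed

lemma factor_through_up_to:
  assumes B: "module R B" and C: "module R C" and N: "module R N"
    and g: "mod_hom R B C g" and \<pi>: "mod_hom R B N \<pi>" and s: "s \<in> carrier R"
    and ker: "\<And>k. k \<in> carrier B \<Longrightarrow> g k = \<zero>\<^bsub>C\<^esub> \<Longrightarrow> s \<odot>\<^bsub>N\<^esub> \<pi> k = \<zero>\<^bsub>N\<^esub>"
    and surj: "\<And>c. c \<in> carrier C \<Longrightarrow> \<exists>b\<in>carrier B. g b = s \<odot>\<^bsub>C\<^esub> c"
  obtains \<sigma> where "mod_hom R C N \<sigma>"
    and "\<And>b. b \<in> carrier B \<Longrightarrow> \<sigma> (g b) = (s \<otimes>\<^bsub>R\<^esub> s) \<odot>\<^bsub>N\<^esub> \<pi> b"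
    and "\<And>c. c \<in> carrier C \<Longrightarrow> \<exists>b\<in>carrier B. g b = s \<odot>\<^bsub>C\<^esub> c \<and> \<sigma> c = s \<odot>\<^bsub>N\<^esub> \<pi> b"
proof -
  interpret B: module R B by fact
  interpret C: module R C by fact
  interpret N: module R N by fact
  have \<pi>_closed: "\<pi> b \<in> carrier N" if "b \<in> carrier B" for b
    using mod_hom_closed[OF \<pi> that] .
  have well_defined: "s \<odot>\<^bsub>N\<^esub> \<pi> b = s \<odot>\<^bsub>N\<^esub> \<pi> b'"
    if b: "b \<in> carrier B" "b' \<in> carrier B" and gb: "g b = g b'" for b b'
  proof -
    let ?k = "b \<ominus>\<^bsub>B\<^esub> b'"
    have k: "?k \<in> carrier B" "b = b' \<oplus>\<^bsub>B\<^esub> ?k"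
      using b by (simp_all add: a_minus_def B.a_lcomm[of b'] B.r_neg)
    have "g ?k = \<zero>\<^bsub>C\<^esub>"
      using mod_hom_minus[OF B C g b] gb mod_hom_closed[OF g b(2)] by (simp add: a_minus_def C.r_neg)
    then have "s \<odot>\<^bsub>N\<^esub> \<pi> b = s \<odot>\<^bsub>N\<^esub> \<pi> b' \<oplus>\<^bsub>N\<^esub> \<zero>\<^bsub>N\<^esub>"
      using k b s ker[OF k(1)] \<pi>_closed by (metis mod_hom_add[OF \<pi>] N.smult_r_distr)
    then show ?thesis
      using b s \<pi>_closed by simp
  qed
  define pre where "pre c = (SOME b. b \<in> carrier B \<and> g b = s \<odot>\<^bsub>C\<^esub> c)" for c
  have pre: "pre c \<in> carrier B" "g (pre c) = s \<odot>\<^bsub>C\<^esub> c" if "c \<in> carrier C" for c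
    using someI_ex[OF surj[OF that, unfolded Bex_def]] unfolding pre_def by auto
  define \<sigma> where "\<sigma> c = s \<odot>\<^bsub>N\<^esub> \<pi> (pre c)" for c
  have \<sigma>_eq: "\<sigma> c = s \<odot>\<^bsub>N\<^esub> \<pi> b" if "c \<in> carrier C" "b \<in> carrier B" "g b = s \<odot>\<^bsub>C\<^esub> c" for b c
    unfolding \<sigma>_def using well_defined pre that by metis
  have "mod_hom R C N \<sigma>"
    unfolding mod_hom_def
  proof (intro conjI ballI)
    show "\<sigma> \<in> carrier C \<rightarrow> carrier N"
      unfolding \<sigma>_def using pre \<pi>_closed s by simp
    fix x y assume x: "x \<in> carrier C" and y: "y \<in> carrier C"
    have "g (pre x \<oplus>\<^bsub>B\<^esub> pre y) = s \<odot>\<^bsub>C\<^esub> (x \<oplus>\<^bsub>C\<^esub> y)"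
      using x y s pre by (simp add: mod_hom_add[OF g] C.smult_r_distr)
    then have "\<sigma> (x \<oplus>\<^bsub>C\<^esub> y) = s \<odot>\<^bsub>N\<^esub> \<pi> (pre x \<oplus>\<^bsub>B\<^esub> pre y)"
      using x y pre by (intro \<sigma>_eq) auto
    then show "\<sigma> (x \<oplus>\<^bsub>C\<^esub> y) = \<sigma> x \<oplus>\<^bsub>N\<^esub> \<sigma> y"
      using x y s pre \<pi>_closed by (simp add: mod_hom_add[OF \<pi>] N.smult_r_distr \<sigma>_def)
  next
    fix r x assume r: "r \<in> carrier R" and x: "x \<in> carrier C"
    have "g (r \<odot>\<^bsub>B\<^esub> pre x) = s \<odot>\<^bsub>C\<^esub> (r \<odot>\<^bsub>C\<^esub> x)"
      using x r s pre by (simp add: mod_hom_smult[OF g] C.smult_commute)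
    then have "\<sigma> (r \<odot>\<^bsub>C\<^esub> x) = s \<odot>\<^bsub>N\<^esub> \<pi> (r \<odot>\<^bsub>B\<^esub> pre x)"
      using x r pre by (intro \<sigma>_eq) auto
    then show "\<sigma> (r \<odot>\<^bsub>C\<^esub> x) = r \<odot>\<^bsub>N\<^esub> \<sigma> x"
      using x r s pre \<pi>_closed by (simp add: mod_hom_smult[OF \<pi>] N.smult_commute \<sigma>_def)
  qed
  moreover have "\<sigma> (g b) = (s \<otimes>\<^bsub>R\<^esub> s) \<odot>\<^bsub>N\<^esub> \<pi> b" if b: "b \<in> carrier B" for b
  proof -
    have "\<sigma> (g b) = s \<odot>\<^bsub>N\<^esub> \<pi> (s \<odot>\<^bsub>B\<^esub> b)"
      using b s mod_hom_closed[OF g b] by (intro \<sigma>_eq) (auto simp: mod_hom_smult[OF g])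
    then show ?thesis
      using b s \<pi>_closed by (simp add: mod_hom_smult[OF \<pi>] N.smult_assoc1)
  qed
  moreover have "\<exists>b\<in>carrier B. g b = s \<odot>\<^bsub>C\<^esub> c \<and> \<sigma> c = s \<odot>\<^bsub>N\<^esub> \<pi> b" if "c \<in> carrier C" for c
    using that pre \<sigma>_def by blast
  ultimately show ?thesis
    using that by blast
qed

lemma section_up_to:
  assumes A: "module R A" and B: "module R B" and C: "module R C"
    and f: "mod_hom R A B f" and g: "mod_hom R B C g" and t: "mod_hom R B A t"
    and s: "s \<in> carrier R" and s1: "s1 \<in> carrier R"
    and tf: "\<And>a. a \<in> carrier A \<Longrightarrow> t (f a) = s1 \<odot>\<^bsub>A\<^esub> a"
    and ker_g: "\<forall>x\<in>mod_ker B C g. s \<odot>\<^bsub>B\<^esub> x \<in> mod_im A f"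
    and im_f: "\<forall>x\<in>mod_im A f. s \<odot>\<^bsub>B\<^esub> x \<in> mod_ker B C g"
    and surj: "\<forall>c\<in>carrier C. s \<odot>\<^bsub>C\<^esub> c \<in> mod_im B g"
  obtains \<sigma> where "mod_hom R C B \<sigma>"
    and "\<And>b. b \<in> carrier B \<Longrightarrow> \<sigma> (g b) = (s \<otimes>\<^bsub>R\<^esub> s) \<odot>\<^bsub>B\<^esub> (s1 \<odot>\<^bsub>B\<^esub> b \<ominus>\<^bsub>B\<^esub> f (t b))"
    and "\<And>c. c \<in> carrier C \<Longrightarrow> g (\<sigma> c) = ((s \<otimes>\<^bsub>R\<^esub> s) \<otimes>\<^bsub>R\<^esub> s1) \<odot>\<^bsub>C\<^esub> c"
proof -
  interpret R: cring R by (rule module.axioms(1)[OF A])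
  interpret B: module R B by fact
  interpret C: module R C by fact
  note f_closed = mod_hom_closed[OF f] and g_closed = mod_hom_closed[OF g]
    and t_closed = mod_hom_closed[OF t]
  define \<pi> where "\<pi> b = s1 \<odot>\<^bsub>B\<^esub> b \<ominus>\<^bsub>B\<^esub> f (t b)" for b
  have \<pi>: "mod_hom R B B \<pi>"
    unfolding \<pi>_def by (rule mod_hom_diff_fun[OF B mod_hom_smult_const[OF B s1] mod_hom_comp[OF t f]])
  have \<pi>f: "\<pi> (f a) = \<zero>\<^bsub>B\<^esub>" if "a \<in> carrier A" for a
    using that f_closed s1 by (simp add: \<pi>_def tf mod_hom_smult[OF f] a_minus_def B.r_neg)
  have ker: "s \<odot>\<^bsub>B\<^esub> \<pi> k = \<zero>\<^bsub>B\<^esub>" if k: "k \<in> carrier B" "g k = \<zero>\<^bsub>C\<^esub>" for k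
  proof -
    obtain a where "a \<in> carrier A" "s \<odot>\<^bsub>B\<^esub> k = f a"
      using ker_g k unfolding mod_ker_def mod_im_def by auto
    then show ?thesis
      using k s by (simp flip: mod_hom_smult[OF \<pi>] add: \<pi>f)
  qed
  have "\<exists>b\<in>carrier B. g b = s \<odot>\<^bsub>C\<^esub> c" if "c \<in> carrier C" for c
    using surj that unfolding mod_im_def by force
  then obtain \<sigma> where \<sigma>: "mod_hom R C B \<sigma>"
    and \<sigma>g: "\<And>b. b \<in> carrier B \<Longrightarrow> \<sigma> (g b) = (s \<otimes>\<^bsub>R\<^esub> s) \<odot>\<^bsub>B\<^esub> \<pi> b"
    and \<sigma>_pre: "\<And>c. c \<in> carrier C \<Longrightarrow> \<exists>b\<in>carrier B. g b = s \<odot>\<^bsub>C\<^esub> c \<and> \<sigma> c = s \<odot>\<^bsub>B\<^esub> \<pi> b"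
    using factor_through_up_to[OF B C B g \<pi> s ker] by blast
  have gf: "s \<odot>\<^bsub>C\<^esub> g (f a) = \<zero>\<^bsub>C\<^esub>" if "a \<in> carrier A" for a
    using im_f that f_closed s unfolding mod_im_def mod_ker_def by (auto simp: mod_hom_smult[OF g])
  have "g (\<sigma> c) = ((s \<otimes>\<^bsub>R\<^esub> s) \<otimes>\<^bsub>R\<^esub> s1) \<odot>\<^bsub>C\<^esub> c" if c: "c \<in> carrier C" for c
  proof -
    obtain b where b: "b \<in> carrier B" "g b = s \<odot>\<^bsub>C\<^esub> c" and \<sigma>c: "\<sigma> c = s \<odot>\<^bsub>B\<^esub> \<pi> b"
      using \<sigma>_pre[OF c] by blast
    have "g (\<sigma> c) = s \<odot>\<^bsub>C\<^esub> g (\<pi> b)"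
      using \<sigma>c s mod_hom_smult[OF g s mod_hom_closed[OF \<pi> b(1)]] by simp
    also have "g (\<pi> b) = s1 \<odot>\<^bsub>C\<^esub> (s \<odot>\<^bsub>C\<^esub> c) \<ominus>\<^bsub>C\<^esub> g (f (t b))"
      unfolding \<pi>_def using b s1 t_closed f_closed
      by (simp add: mod_hom_minus[OF B C g] mod_hom_smult[OF g])
    also have "s \<odot>\<^bsub>C\<^esub> (s1 \<odot>\<^bsub>C\<^esub> (s \<odot>\<^bsub>C\<^esub> c) \<ominus>\<^bsub>C\<^esub> g (f (t b))) = s \<odot>\<^bsub>C\<^esub> (s1 \<odot>\<^bsub>C\<^esub> (s \<odot>\<^bsub>C\<^esub> c))"
      using c s s1 gf[OF t_closed[OF b(1)]] g_closed f_closed t_closed b(1)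
      by (simp add: a_minus_def C.smult_r_distr C.smult_r_minus)
    also have "\<dots> = (s \<otimes>\<^bsub>R\<^esub> (s1 \<otimes>\<^bsub>R\<^esub> s)) \<odot>\<^bsub>C\<^esub> c"
      using c s s1 by (simp add: C.smult_assoc1)
    also have "s \<otimes>\<^bsub>R\<^esub> (s1 \<otimes>\<^bsub>R\<^esub> s) = (s \<otimes>\<^bsub>R\<^esub> s) \<otimes>\<^bsub>R\<^esub> s1"
      using s s1 by (simp add: R.m_ac)
    finally show ?thesis .
  qed
  with \<sigma> \<sigma>g show ?thesis
    unfolding \<pi>_def by (rule that)
qed

lemma u_S_split_exact_imp_split_up_to:
  assumes S: "mult_subset R S" and A: "module R A" and B: "module R B" and C: "module R C"
    and f: "mod_hom R A B f" and g: "mod_hom R B C g"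
    and exact: "u_S_exact R S A B C f g" and split: "u_S_split R S A B f"
  obtains r \<tau> \<sigma> where "r \<in> S" "mod_hom R B A \<tau>" "mod_hom R C B \<sigma>" "split_up_to A B C f g \<tau> \<sigma> r"
proof -
  interpret A: module R A by fact
  interpret B: module R B by fact
  obtain s where s: "s \<in> S"
    and ker_g: "\<forall>x\<in>mod_ker B C g. s \<odot>\<^bsub>B\<^esub> x \<in> mod_im A f"
    and im_f: "\<forall>x\<in>mod_im A f. s \<odot>\<^bsub>B\<^esub> x \<in> mod_ker B C g"
    and surj: "\<forall>c\<in>carrier C. s \<odot>\<^bsub>C\<^esub> c \<in> mod_im B g"
    using exact unfolding u_S_exact_def by blast
  obtain s1 t where s1: "s1 \<in> S" and t: "mod_hom R B A t"
    and tf: "\<And>a. a \<in> carrier A \<Longrightarrow> t (f a) = s1 \<odot>\<^bsub>A\<^esub> a"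
    using split unfolding u_S_split_def by blast
  have sR: "s \<in> carrier R" and s1R: "s1 \<in> carrier R" and ssR: "s \<otimes>\<^bsub>R\<^esub> s \<in> carrier R"
    using s s1 S unfolding mult_subset_def by auto
  obtain \<sigma> where \<sigma>: "mod_hom R C B \<sigma>"
    and \<sigma>g: "\<And>b. b \<in> carrier B \<Longrightarrow> \<sigma> (g b) = (s \<otimes>\<^bsub>R\<^esub> s) \<odot>\<^bsub>B\<^esub> (s1 \<odot>\<^bsub>B\<^esub> b \<ominus>\<^bsub>B\<^esub> f (t b))"
    and g\<sigma>: "\<And>c. c \<in> carrier C \<Longrightarrow> g (\<sigma> c) = ((s \<otimes>\<^bsub>R\<^esub> s) \<otimes>\<^bsub>R\<^esub> s1) \<odot>\<^bsub>C\<^esub> c"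
    using section_up_to[OF A B C f g t sR s1R tf ker_g im_f surj] by blast
  define r where "r = (s \<otimes>\<^bsub>R\<^esub> s) \<otimes>\<^bsub>R\<^esub> s1"
  have r: "r \<in> S"
    using s s1 S unfolding r_def mult_subset_def by auto
  define \<tau> where "\<tau> b = (s \<otimes>\<^bsub>R\<^esub> s) \<odot>\<^bsub>A\<^esub> t b" for b
  have \<tau>: "mod_hom R B A \<tau>"
    unfolding \<tau>_def by (rule mod_hom_comp[OF t mod_hom_smult_const[OF A ssR]])
  have "\<tau> (f a) = r \<odot>\<^bsub>A\<^esub> a" if "a \<in> carrier A" for a
    using that sR s1R by (simp add: \<tau>_def tf r_def A.smult_assoc1)
  moreover have "\<sigma> (g b) \<oplus>\<^bsub>B\<^esub> f (\<tau> b) = r \<odot>\<^bsub>B\<^esub> b" if b: "b \<in> carrier B" for b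
    using b sR s1R ssR mod_hom_closed[OF t] mod_hom_closed[OF f]
    by (simp add: \<sigma>g \<tau>_def r_def mod_hom_smult[OF f] a_minus_def B.smult_r_distr
        B.smult_r_minus B.a_assoc B.l_neg B.smult_assoc1)
  ultimately have "split_up_to A B C f g \<tau> \<sigma> r"
    using g\<sigma> unfolding split_up_to_def r_def by blast
  with r \<tau> \<sigma> show ?thesis
    by (rule that)
qed

theorem proposition2p3:
  fixes R :: "'r ring" and S :: "'r set"
    and A :: "('r, 'a) module" and B :: "('r, 'b) module" and C :: "('r, 'c) module"
    and f :: "'a \<Rightarrow> 'b" and g :: "'b \<Rightarrow> 'c"
  assumes "cring R"
    and "mult_subset R S"
    and "module R A" and "module R B" and "module R C"
    and "mod_hom R A B f" and "mod_hom R B C g"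
    and "u_S_exact R S A B C f g"
    and "u_S_split R S A B f"
  shows "\<forall>(M :: ('r, 'm) module)
            (TA :: ('r, 'ta) module) tA (TB :: ('r, 'tb) module) tB (TC :: ('r, 'tc) module) tC
            (F :: 'ta \<Rightarrow> 'tb) (G :: 'tb \<Rightarrow> 'tc).
           module R M \<and>
           tensor_product R M A TA tA \<and> tensor_product R M B TB tB \<and> tensor_product R M C TC tC \<and>
           mod_hom R TA TB F \<and> (\<forall>m\<in>carrier M. \<forall>a\<in>carrier A. F (tA m a) = tB m (f a)) \<and>
           mod_hom R TB TC G \<and> (\<forall>m\<in>carrier M. \<forall>b\<in>carrier B. G (tB m b) = tC m (g b))
           \<longrightarrow> u_S_exact R S TA TB TC F G"
proof (intro allI impI, elim conjE)
  fix M :: "('r, 'm) module" and TA :: "('r, 'ta) module" and tA and TB :: "('r, 'tb) module" and tB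
    and TC :: "('r, 'tc) module" and tC and F :: "'ta \<Rightarrow> 'tb" and G :: "'tb \<Rightarrow> 'tc"
  assume TA: "tensor_product R M A TA tA" and TB: "tensor_product R M B TB tB"
    and TC: "tensor_product R M C TC tC"
    and F: "mod_hom R TA TB F" "\<forall>m\<in>carrier M. \<forall>a\<in>carrier A. F (tA m a) = tB m (f a)"
    and G: "mod_hom R TB TC G" "\<forall>m\<in>carrier M. \<forall>b\<in>carrier B. G (tB m b) = tC m (g b)"
  obtain r \<tau> \<sigma> where r: "r \<in> S" and \<tau>: "mod_hom R B A \<tau>" and \<sigma>: "mod_hom R C B \<sigma>"
    and split: "split_up_to A B C f g \<tau> \<sigma> r"
    using u_S_split_exact_imp_split_up_to[OF assms(2-9)] .
  obtain T where T: "mod_hom R TB TA T" "\<forall>m\<in>carrier M. \<forall>b\<in>carrier B. T (tB m b) = tA m (\<tau> b)"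
    using tensor_map_exists[OF TB TA \<tau>] by blast
  obtain \<Sigma> where \<Sigma>: "mod_hom R TC TB \<Sigma>" "\<forall>m\<in>carrier M. \<forall>c\<in>carrier C. \<Sigma> (tC m c) = tB m (\<sigma> c)"
    using tensor_map_exists[OF TC TB \<sigma>] by blast
  have rR: "r \<in> carrier R"
    using r assms(2) unfolding mult_subset_def by blast
  have "split_up_to TA TB TC F G T \<Sigma> r"
    using split_up_to_tensor[OF TA TB TC assms(6,7) \<tau> \<sigma> F(1) _ G(1) _ T(1) _ \<Sigma>(1) _ rR split]
      F(2) G(2) T(2) \<Sigma>(2) by blast
  then show "u_S_exact R S TA TB TC F G"
    by (rule split_up_to_imp_u_S_exact[OF tensor_product_module[OF TA] tensor_product_module[OF TB]
          tensor_product_module[OF TC] F(1) G(1) T(1) \<Sigma>(1) r rR])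
qed

end
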